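(* Let $P:(-\infty,\tfrac12)\to\mathbb{C}\cong\mathbb{R}^2$ be the log-aesthetic curve with shape parameter $\alpha=-1$ and $\Lambda=1$ (a clothoid), $P(\theta)=\int_0^\theta(1-2\psi)^{-1/2}e^{i\psi}\,d\psi$, and let $\delta=\tfrac{2\pi}{3}$. Let $I_\delta$ be its isoptic curve for the angle $\gamma=\pi-\delta=\pi/3$, parametrized for $\theta<\tfrac12-\delta$ by $$I_\delta(\theta)=P(\theta)+\csc(\delta)\Big(V_x(\theta)\sin(\theta+\delta)-V_y(\theta)\cos(\theta+\delta)\Big)(\cos\theta,\sin\theta)^T,$$ where $(V_x(\theta),V_y(\theta))^T$ is the vector $P(\theta+\delta)-P(\theta)$ (i.e. $I_\delta(\theta)$ is the intersection of the tangent lines of $P$ at $P(\theta)$ and $P(\theta+\delta)$). Then the logarithmic curvature graph of $I_\delta$ is not a straight line (its slope is not constant); hence the isoptic is not a log-aesthetic curve, and in particular the clothoid is not autoisoptic. Moreover, the slope of the logarithmic curvature graph of $I_\delta$ (measured between the points with parameters $\theta$ and $\theta-\pi$) tends to $-1$ as $\theta\to-\infty$.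
   Context: For a regular plane curve with radius of curvature $\rho$ and arc length $s$, the logarithmic curvature graph (LCG) is the curve traced by the points $\big(\log\rho,\ \log(\rho\,|ds/d\rho|)\big)$ along the curve. A log-aesthetic curve with shape parameter $\alpha$ is a curve whose LCG is a straight line of slope $\alpha$, i.e. $\log(\rho\, ds/d\rho)=\alpha\log\rho+c$ for a constant $c$. A curve is called autoisoptic if it coincides (up to similarity) with its isoptic curve. The isoptic curve for angle $\gamma\in(0,\pi)$ is the locus of points from which the curve is seen under angle $\gamma$ (intersection points of pairs of tangent lines meeting at angle $\gamma$). *)

theory Defs
  imports "HOL-Analysis.Analysis"
begin

definition oint0 :: "(real \<Rightarrow> complex) \<Rightarrow> real \<Rightarrow> complex" where
  "oint0 f \<theta> = (if 0 \<le> \<theta> then integral {0..\<theta>} f else - integral {\<theta>..0} f)"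

definition clothoidP :: "real \<Rightarrow> complex" where
  "clothoidP \<theta> = oint0 (\<lambda>\<psi>. complex_of_real ((1 - 2*\<psi>) powr (-1/2)) * cis \<psi>) \<theta>"

definition isoDelta :: real where "isoDelta = 2*pi/3"

definition isopticI :: "real \<Rightarrow> complex" where
  "isopticI \<theta> =
     (let V = clothoidP (\<theta> + isoDelta) - clothoidP \<theta> in
      clothoidP \<theta> + complex_of_real ((1 / sin isoDelta) *
          (Re V * sin (\<theta> + isoDelta) - Im V * cos (\<theta> + isoDelta))) * cis \<theta>)"

definition dcurve :: "(real \<Rightarrow> complex) \<Rightarrow> real \<Rightarrow> complex" where
  "dcurve c = (\<lambda>t. vector_derivative c (at t))"

definition speed :: "(real \<Rightarrow> complex) \<Rightarrow> real \<Rightarrow> real" where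
  "speed c t = cmod (dcurve c t)"

definition radius_curv :: "(real \<Rightarrow> complex) \<Rightarrow> real \<Rightarrow> real" where
  "radius_curv c t = speed c t ^ 3 / \<bar>Im (cnj (dcurve c t) * dcurve (dcurve c) t)\<bar>"

(* LCG coordinates: (log rho, log (rho |ds/drho|)), with ds/drho = (ds/dt)/(drho/dt) *)
definition lcg_x :: "(real \<Rightarrow> complex) \<Rightarrow> real \<Rightarrow> real" where
  "lcg_x c t = ln (radius_curv c t)"

definition lcg_y :: "(real \<Rightarrow> complex) \<Rightarrow> real \<Rightarrow> real" where
  "lcg_y c t = ln (radius_curv c t * \<bar>speed c t / deriv (radius_curv c) t\<bar>)"

end

(* Write G_k for chord k.  G_0(t) = cnj (P(t+d) - P(t)) * e^(i(t+d)) is the integral over [t, t+d]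
   of rho(s) e^(i(t+d-s)) with rho(s) = (1-2s)^(-1/2); G_k is the same integral with the k-th
   derivative of rho, and G_k' = G_(k+1).  Since I' = e^(it) G_0 / sin d, the speed, the radius of
   curvature and both LCG coordinates of the isoptic are explicit in |G_0|^2, Im (cnj G_0 * G_1)
   and their derivatives.

   As t -> -oo the derivatives of rho vary slowly over intervals of length d, so G_k is asymptotic
   to rho^(k)(t) * i(1 - e^(id)).  Expanding, the quotient of the t-derivatives of the two LCG
   coordinates tends to -1, and the Cauchy mean value theorem turns this into the limit of the
   slopes between the parameters t - pi and t.  Hence a straight LCG must have slope -1.  Then the
   derivative of the curvature of the isoptic is proportional to its speed, hence bounded near the
   end t -> 1/2 - d of the parameter range; but there rho(t+d) -> oo drives Im (cnj G_0 * G_1) to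
   -oo and the curvature to +oo. *)

theory Submission
  imports Defs "HOL-Real_Asymp.Real_Asymp"
begin

lemma has_vector_derivative_cis [derivative_intros]:
  assumes "(f has_real_derivative f') (at x within A)"
  shows "((\<lambda>x. cis (f x)) has_vector_derivative (\<i> * cis (f x) * of_real f')) (at x within A)"
proof -
  have "(f has_derivative (\<lambda>t. f' * t)) (at x within A)"
    using assms by (simp add: has_field_derivative_def)
  from has_derivative_cis[OF this] show ?thesis
    by (simp add: has_vector_derivative_def scaleR_conv_of_real algebra_simps)
qed

lemma oint0_eq_integral_diff:
  assumes f: "continuous_on {a..b} f" and "a \<le> 0" "0 \<le> b" "\<theta> \<in> {a..b}"
  shows "oint0 f \<theta> = integral {a..\<theta>} f - integral {a..0} f"
proof (cases "0 \<le> \<theta>")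
  case True
  have "integral {a..0} f + integral {0..\<theta>} f = integral {a..\<theta>} f"
    by (rule Henstock_Kurzweil_Integration.integral_combine)
       (use assms True in \<open>auto intro!: integrable_continuous_interval continuous_on_subset[OF f]\<close>)
  then show ?thesis using True by (simp add: oint0_def algebra_simps)
next
  case False
  have "integral {a..\<theta>} f + integral {\<theta>..0} f = integral {a..0} f"
    by (rule Henstock_Kurzweil_Integration.integral_combine)
       (use assms False in \<open>auto intro!: integrable_continuous_interval continuous_on_subset[OF f]\<close>)
  then show ?thesis using False by (simp add: oint0_def algebra_simps)
qed

lemma oint0_diff:
  assumes f: "continuous_on {..<c} f" and "0 < c" "\<theta> \<le> \<theta>'" "\<theta>' < c"
  shows "oint0 f \<theta>' - oint0 f \<theta> = integral {\<theta>..\<theta>'} f"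
proof -
  define a where "a = min 0 \<theta>"
  define b where "b = max 0 \<theta>'"
  have ab: "a \<le> 0" "0 \<le> b" "a \<le> \<theta>" "\<theta>' \<le> b" "b < c" using assms by (auto simp: a_def b_def)
  have fab: "continuous_on {a..b} f" using ab by (auto intro: continuous_on_subset[OF f])
  have "integral {a..\<theta>} f + integral {\<theta>..\<theta>'} f = integral {a..\<theta>'} f"
    by (rule Henstock_Kurzweil_Integration.integral_combine)
       (use ab assms in \<open>auto intro!: integrable_continuous_interval continuous_on_subset[OF fab]\<close>)
  then show ?thesis
    using ab assms by (simp add: oint0_eq_integral_diff[OF fab] algebra_simps)
qed

lemma oint0_has_vector_derivative:
  assumes f: "continuous_on {..<c} f" and "0 < c" "\<theta> < c"
  shows "(oint0 f has_vector_derivative f \<theta>) (at \<theta>)"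
proof -
  define a where "a = min 0 \<theta> - 1"
  define b where "b = (max 0 \<theta> + c) / 2"
  have ab: "a < \<theta>" "\<theta> < b" "a \<le> 0" "0 \<le> b" "b < c" using assms by (auto simp: a_def b_def)
  have fab: "continuous_on {a..b} f" using ab by (auto intro: continuous_on_subset[OF f])
  have "((\<lambda>u. integral {a..u} f) has_vector_derivative f \<theta>) (at \<theta> within {a..b})"
    using fab ab by (intro integral_has_vector_derivative) auto
  then have "((\<lambda>u. integral {a..u} f - integral {a..0} f) has_vector_derivative f \<theta>) (at \<theta>)"
    using ab by (simp add: at_within_Icc_at has_vector_derivative_diff_const)
  then show ?thesis
    by (rule has_vector_derivative_transform_within_open[of _ _ _ "{a<..<b}"])
       (use ab in \<open>auto simp: oint0_eq_integral_diff[OF fab]\<close>)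
qed

lemma mono_weight_integral_bounds:
  fixes r :: "real \<Rightarrow> real" and e :: "real \<Rightarrow> complex"
  assumes r: "mono_on {a..b} r" and "a \<le> b"
    and I: "((\<lambda>\<psi>. of_real (r \<psi>) * e \<psi>) has_integral I) {a..b}" and E: "(e has_integral E) {a..b}"
  shows "(\<And>\<psi>. \<psi> \<in> {a..b} \<Longrightarrow> norm (e \<psi>) \<le> 1) \<Longrightarrow>
           norm (I - of_real (r a) * E) \<le> (b - a) * (r b - r a)"
    and "(\<And>\<psi>. \<psi> \<in> {a..b} \<Longrightarrow> Im (e \<psi>) \<ge> 0) \<Longrightarrow> Im (of_real (r a) * E) \<le> Im I"
proof -
  have diff: "((\<lambda>\<psi>. of_real (r \<psi> - r a) * e \<psi>) has_integral I - of_real (r a) * E) {a..b}"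
    using has_integral_diff[OF I has_integral_mult_right[OF E, of "of_real (r a)"]]
    by (simp add: algebra_simps)
  have ra: "r a \<le> r \<psi>" "r \<psi> \<le> r b" if "\<psi> \<in> {a..b}" for \<psi>
    using that \<open>a \<le> b\<close> by (auto intro: mono_onD[OF r])
  show "norm (I - of_real (r a) * E) \<le> (b - a) * (r b - r a)"
    if e: "\<And>\<psi>. \<psi> \<in> {a..b} \<Longrightarrow> norm (e \<psi>) \<le> 1"
  proof -
    have "norm (I - of_real (r a) * E) \<le> (r b - r a) * Henstock_Kurzweil_Integration.content {a..b}"
    proof (rule has_integral_bound_real[OF _ _ diff])
      fix \<psi> assume "\<psi> \<in> {a..b} - {}"
      with ra e have "\<bar>r \<psi> - r a\<bar> * norm (e \<psi>) \<le> (r b - r a) * 1"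
        by (intro mult_mono) auto
      then show "norm (of_real (r \<psi> - r a) * e \<psi>) \<le> r b - r a"
        by (simp add: norm_mult del: of_real_diff)
    qed (use ra \<open>a \<le> b\<close> in auto)
    then show ?thesis using \<open>a \<le> b\<close> by (simp add: mult.commute)
  qed
  show "Im (of_real (r a) * E) \<le> Im I" if e: "\<And>\<psi>. \<psi> \<in> {a..b} \<Longrightarrow> Im (e \<psi>) \<ge> 0"
  proof -
    have "0 \<le> Im (I - of_real (r a) * E)"
      by (rule has_integral_nonneg[OF has_integral_linear[OF diff bounded_linear_Im]])
         (use ra e in \<open>auto simp: o_def\<close>)
    then show ?thesis by simp
  qed
qed

lemma difference_quotient_tendsto_at_bot:
  fixes f g f' g' :: "real \<Rightarrow> real"
  assumes deriv: "eventually (\<lambda>t. (f has_real_derivative f' t) (at t) \<and>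
                                 (g has_real_derivative g' t) (at t) \<and> f' t > 0) at_bot"
    and lim: "((\<lambda>t. g' t / f' t) \<longlongrightarrow> L) at_bot" and "h > 0"
  shows "((\<lambda>t. (g t - g (t - h)) / (f t - f (t - h))) \<longlongrightarrow> L) at_bot"
proof -
  obtain M where M: "\<And>t. t \<le> M \<Longrightarrow> (f has_real_derivative f' t) (at t) \<and>
                                     (g has_real_derivative g' t) (at t) \<and> f' t > 0"
    using deriv by (auto simp: eventually_at_bot_linorder)
  have mvt: "\<exists>c\<le>t. (g t - g (t - h)) / (f t - f (t - h)) = g' c / f' c" if "t \<le> M" for t
  proof -
    have ht: "t - h < t" using \<open>h > 0\<close> by simp
    have D: "(f has_real_derivative f' z) (at z)" "(g has_real_derivative g' z) (at z)" "f' z > 0"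
      if "z \<le> t" for z using M that \<open>t \<le> M\<close> by auto
    have cont: "isCont f z" "isCont g z" if "z \<le> t" for z
      using D[OF that] by (auto intro: DERIV_isCont)
    obtain c where c: "t - h < c" "c < t" "(f t - f (t - h)) * g' c = (g t - g (t - h)) * f' c"
      using GMVT'[OF ht, of f g g' f'] cont D(1,2) by auto
    have "f (t - h) < f t"
      using DERIV_pos_imp_increasing[OF ht, of f] D by auto
    with c D(3)[of c] show ?thesis by (intro exI[of _ c]) (auto simp: field_simps)
  qed
  show ?thesis unfolding tendsto_iff
  proof (intro allI impI)
    fix e :: real assume "e > 0"
    with lim obtain M' where M': "\<And>c. c \<le> M' \<Longrightarrow> dist (g' c / f' c) L < e"
      by (auto simp: tendsto_iff eventually_at_bot_linorder)
    show "eventually (\<lambda>t. dist ((g t - g (t - h)) / (f t - f (t - h))) L < e) at_bot"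
    proof (rule eventually_at_bot_linorderI[of "min M M'"])
      fix t :: real assume "t \<le> min M M'"
      with mvt obtain c where "c \<le> t" "(g t - g (t - h)) / (f t - f (t - h)) = g' c / f' c"
        by auto
      with M' \<open>t \<le> min M M'\<close> show "dist ((g t - g (t - h)) / (f t - f (t - h))) L < e"
        by simp
    qed
  qed
qed

lemma affine_slope_eq_difference_quotient_limit:
  fixes x y :: "real \<Rightarrow> real"
  assumes affine: "\<And>t. t < c \<Longrightarrow> y t = \<alpha> * x t + k" and "h \<ge> 0"
    and lim: "((\<lambda>t. (y t - y (t - h)) / (x t - x (t - h))) \<longlongrightarrow> L) at_bot" and "L \<noteq> 0"
  shows "\<alpha> = L"
proof -
  have "eventually (\<lambda>t. (y t - y (t - h)) / (x t - x (t - h)) = \<alpha>) at_bot"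
    using tendsto_imp_eventually_ne[OF lim \<open>L \<noteq> 0\<close>] eventually_gt_at_bot[of c]
  proof eventually_elim
    case (elim t)
    have "y t - y (t - h) = \<alpha> * (x t - x (t - h))"
      using affine[of t] affine[of "t - h"] elim(2) \<open>h \<ge> 0\<close> by (simp add: right_diff_distrib)
    moreover from this have "x t - x (t - h) \<noteq> 0" using elim(1) by auto
    ultimately show ?case by simp
  qed
  with lim have "((\<lambda>t. \<alpha>) \<longlongrightarrow> L) (at_bot :: real filter)"
    by (rule Lim_transform_eventually)
  then show ?thesis by (simp add: tendsto_const_iff)
qed

lemma bounded_derivative_imp_not_tendsto_at_top:
  fixes u u' :: "real \<Rightarrow> real"
  assumes "b < c"
    and D: "\<And>t. t \<in> {b<..<c} \<Longrightarrow> (u has_real_derivative u' t) (at t) \<and> \<bar>u' t\<bar> \<le> C"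
  shows "\<not> filterlim u at_top (at_left c)"
proof
  assume top: "filterlim u at_top (at_left c)"
  define t0 where "t0 = (b + c) / 2"
  have t0: "b < t0" "t0 < c" using \<open>b < c\<close> by (auto simp: t0_def)
  have bound: "u t \<le> u t0 + (c - t0) * C" if "t0 < t" "t < c" for t
  proof -
    have "(u has_real_derivative u' x) (at x)" if "t0 \<le> x" "x \<le> t" for x
      using D[of x] that t0 \<open>t < c\<close> by simp
    then obtain z where z: "t0 < z" "z < t" "u t - u t0 = (t - t0) * u' z"
      using MVT2[OF \<open>t0 < t\<close>, of u u'] by blast
    have "\<bar>u' z\<bar> \<le> C" using D[of z] z t0 that by simp
    have "(t - t0) * u' z \<le> (t - t0) * \<bar>u' z\<bar>" using z by (intro mult_left_mono) auto
    also have "\<dots> \<le> (c - t0) * C" using z that \<open>\<bar>u' z\<bar> \<le> C\<close> by (intro mult_mono) auto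
    finally have "(t - t0) * u' z \<le> (c - t0) * C" .
    with z show ?thesis by simp
  qed
  have "eventually (\<lambda>t. u t \<le> u t0 + (c - t0) * C) (at_left c)"
    using eventually_at_left_real[OF \<open>t0 < c\<close>] by eventually_elim (use bound in auto)
  moreover have "eventually (\<lambda>t. u t0 + (c - t0) * C + 1 \<le> u t) (at_left c)"
    using top by (simp add: filterlim_at_top)
  ultimately have "eventually (\<lambda>t. False) (at_left c)" by eventually_elim auto
  then show False by simp
qed

lemma lcg_y_eq_ln_speed_div:
  assumes "(radius_curv c has_real_derivative radius_curv c t * L) (at t)" "radius_curv c t > 0"
  shows "lcg_y c t = ln (speed c t / \<bar>L\<bar>)"
proof -
  have "deriv (radius_curv c) t = radius_curv c t * L" using assms(1) by (rule DERIV_imp_deriv)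
  moreover have "speed c t \<ge> 0" by (simp add: speed_def)
  ultimately show ?thesis
    using assms(2) by (simp add: lcg_y_def abs_divide abs_mult)
qed

text \<open>The left-hand side is \<open>|d\<kappa>/dt|\<close> for the curvature \<open>\<kappa> = 1/\<rho>\<close>: LCG slope \<open>-1\<close> makes the
  curvature change at a rate proportional to arc length, as on a clothoid.\<close>

lemma lcg_slope_minus_one_imp_curvature_deriv_le:
  assumes R: "(radius_curv c has_real_derivative R') (at t)" "radius_curv c t > 0"
    and "speed c t > 0" and line: "lcg_y c t = - lcg_x c t + k"
  shows "\<bar>R'\<bar> / radius_curv c t ^ 2 \<le> exp (- k) * speed c t"
proof (cases "R' = 0")
  case False
  define \<rho> where "\<rho> = radius_curv c t"
  have pos: "\<rho> * (speed c t / \<bar>R'\<bar>) > 0"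
    using False assms(3) R(2) by (simp add: \<rho>_def)
  have "ln (\<rho> * (speed c t / \<bar>R'\<bar>)) = ln (exp k / \<rho>)"
    using line R by (simp add: lcg_y_def lcg_x_def DERIV_imp_deriv abs_divide \<rho>_def
        ln_div assms(3) less_imp_le[OF assms(3)])
  then have "\<rho> * (speed c t / \<bar>R'\<bar>) = exp k / \<rho>"
    using pos R(2) by (simp add: \<rho>_def)
  then have "\<bar>R'\<bar> / \<rho> ^ 2 = exp (- k) * speed c t"
    using False R(2) by (simp add: \<rho>_def field_simps power2_eq_square exp_minus)
  then show ?thesis by (simp add: \<rho>_def)
qed (use assms(3) in simp)

section \<open>The clothoid\<close>

lemma isoDelta_pos: "isoDelta > 0"
  by (simp add: isoDelta_def)

lemma isoDelta_le_pi: "isoDelta \<le> pi"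
  by (simp add: isoDelta_def)

lemma isoDelta_eq: "isoDelta = pi - pi/3"
  by (simp add: isoDelta_def)

lemma sin_isoDelta: "sin isoDelta = sqrt 3 / 2"
  unfolding isoDelta_eq sin_pi_minus by (simp add: sin_60)

lemma cos_isoDelta: "cos isoDelta = - 1/2"
  unfolding isoDelta_eq cos_pi_minus by (simp add: cos_60)

lemma sin_isoDelta_pos: "sin isoDelta > 0"
  by (simp add: sin_isoDelta)

definition rho :: "real \<Rightarrow> real" where
  "rho \<theta> = (1 - 2*\<theta>) powr (-1/2)"

fun odd_double_fact :: "nat \<Rightarrow> real" where
  "odd_double_fact 0 = 1"
| "odd_double_fact (Suc k) = (2 * real k + 1) * odd_double_fact k"

definition tau :: "real \<Rightarrow> real" where
  "tau \<theta> = 1 / (1 - 2*\<theta>)"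

definition rho_deriv :: "nat \<Rightarrow> real \<Rightarrow> real" where
  "rho_deriv k \<theta> = odd_double_fact k * (1 - 2*\<theta>) powr (- 1/2 - real k)"

lemma odd_double_fact_pos: "odd_double_fact k > 0"
  by (induction k) auto

lemma rho_deriv_0: "rho_deriv 0 = rho"
  by (simp add: rho_deriv_def rho_def fun_eq_iff)

lemma rho_deriv_pos: "\<theta> < 1/2 \<Longrightarrow> rho_deriv k \<theta> > 0"
  by (simp add: rho_deriv_def odd_double_fact_pos)

lemma rho_pos: "\<theta> < 1/2 \<Longrightarrow> rho \<theta> > 0"
  using rho_deriv_pos[of \<theta> 0] by (simp add: rho_deriv_0)

lemma tau_pos: "\<theta> < 1/2 \<Longrightarrow> tau \<theta> > 0"
  by (simp add: tau_def)

lemma tau_tendsto: "(tau \<longlongrightarrow> 0) at_bot"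
  unfolding tau_def[abs_def] by real_asymp

lemma rho_deriv_has_real_derivative:
  assumes "\<theta> < 1/2"
  shows "(rho_deriv k has_real_derivative rho_deriv (Suc k) \<theta>) (at \<theta>)"
proof -
  have "((\<lambda>\<theta>. odd_double_fact k * (1 - 2*\<theta>) powr (- 1/2 - real k)) has_real_derivative
      odd_double_fact k * ((- 1/2 - real k) * (1 - 2*\<theta>) powr (- 1/2 - real k - 1) * (0 - 2 * 1)))
      (at \<theta>)"
    using assms by (intro derivative_eq_intros) auto
  then show ?thesis
    by (simp add: rho_deriv_def[abs_def] algebra_simps)
qed

lemma continuous_on_rho_deriv [continuous_intros]:
  "S \<subseteq> {..<1/2} \<Longrightarrow> continuous_on S (rho_deriv k)"
  by (intro continuous_at_imp_continuous_on ballI DERIV_isCont[OF rho_deriv_has_real_derivative]) auto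

lemma rho_deriv_mono: "x \<le> y \<Longrightarrow> y < 1/2 \<Longrightarrow> rho_deriv k x \<le> rho_deriv k y"
  by (rule DERIV_nonneg_imp_nondecreasing)
     (auto intro!: exI rho_deriv_has_real_derivative less_imp_le rho_deriv_pos)

lemma rho_deriv_mono_on: "b < 1/2 \<Longrightarrow> mono_on {a..b} (rho_deriv k)"
  by (intro mono_onI rho_deriv_mono) auto

lemma rho_deriv_eq_scaled:
  assumes "\<theta> < 1/2"
  shows "rho_deriv k \<theta> = odd_double_fact k * rho \<theta> * tau \<theta> ^ k"
proof -
  have "(1 - 2*\<theta>) powr (- 1/2 - real k) = (1 - 2*\<theta>) powr (-1/2) * (1 - 2*\<theta>) powr (- real k)"
    by (simp add: powr_add[symmetric])
  also have "(1 - 2*\<theta>) powr (- real k) = tau \<theta> ^ k"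
    using assms by (simp add: tau_def powr_minus powr_realpow power_one_over inverse_eq_divide)
  finally show ?thesis by (simp add: rho_deriv_def rho_def)
qed

lemma rho_deriv_shift_ratio_tendsto: "((\<lambda>\<theta>. rho_deriv k (\<theta> + d) / rho_deriv k \<theta>) \<longlongrightarrow> 1) at_bot"
proof -
  have "((\<lambda>\<theta>. (1 - 2*(\<theta> + d)) powr (- 1/2 - real k) / (1 - 2*\<theta>) powr (- 1/2 - real k)) \<longlongrightarrow> 1) at_bot"
    by real_asymp
  then show ?thesis
    using odd_double_fact_pos[of k] by (simp add: rho_deriv_def)
qed

lemma clothoidP_eq_oint0: "clothoidP = oint0 (\<lambda>\<psi>. of_real (rho \<psi>) * cis \<psi>)"
  by (simp add: clothoidP_def[abs_def] rho_def)

lemma continuous_on_clothoid_tangent: "continuous_on {..<1/2} (\<lambda>\<psi>. of_real (rho \<psi>) * cis \<psi>)"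
  using continuous_on_rho_deriv[of _ 0] by (intro continuous_intros) (simp add: rho_deriv_0)

lemma clothoidP_has_vector_derivative:
  "\<theta> < 1/2 \<Longrightarrow> (clothoidP has_vector_derivative of_real (rho \<theta>) * cis \<theta>) (at \<theta>)"
  unfolding clothoidP_eq_oint0
  by (rule oint0_has_vector_derivative[OF continuous_on_clothoid_tangent]) auto

lemma clothoidP_diff:
  "\<theta> \<le> \<theta>' \<Longrightarrow> \<theta>' < 1/2 \<Longrightarrow>
     clothoidP \<theta>' - clothoidP \<theta> = integral {\<theta>..\<theta>'} (\<lambda>\<psi>. of_real (rho \<psi>) * cis \<psi>)"
  unfolding clothoidP_eq_oint0 by (rule oint0_diff[OF continuous_on_clothoid_tangent]) auto

section \<open>The rotated chord and its derivatives\<close>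

definition chord :: "nat \<Rightarrow> real \<Rightarrow> complex" where
  "chord k \<theta> = integral {\<theta>..\<theta> + isoDelta} (\<lambda>\<psi>. of_real (rho_deriv k \<psi>) * cis (\<theta> + isoDelta - \<psi>))"

lemma chord_has_integral:
  assumes "\<theta> < 1/2 - isoDelta"
  shows "((\<lambda>\<psi>. of_real (rho_deriv k \<psi>) * cis (\<theta> + isoDelta - \<psi>)) has_integral chord k \<theta>)
           {\<theta>..\<theta> + isoDelta}"
  unfolding chord_def using assms
  by (intro integrable_integral integrable_continuous_interval continuous_intros) auto

lemma chord_0_eq:
  assumes "\<theta> < 1/2 - isoDelta"
  shows "chord 0 \<theta> = cnj (clothoidP (\<theta> + isoDelta) - clothoidP \<theta>) * cis (\<theta> + isoDelta)"
proof -
  have "cnj (clothoidP (\<theta> + isoDelta) - clothoidP \<theta>) * cis (\<theta> + isoDelta)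
      = integral {\<theta>..\<theta> + isoDelta} (\<lambda>\<psi>. cis (\<theta> + isoDelta) * (of_real (rho \<psi>) * cis (- \<psi>)))"
    using assms isoDelta_pos by (simp add: clothoidP_diff integral_cnj cis_cnj mult.commute)
  also have "\<dots> = chord 0 \<theta>"
    by (simp add: chord_def rho_deriv_0 cis_mult mult.left_commute)
  finally show ?thesis ..
qed

lemma chord_Suc:
  assumes "\<theta> < 1/2 - isoDelta"
  shows "chord (Suc k) \<theta> = \<i> * chord k \<theta> + of_real (rho_deriv k (\<theta> + isoDelta))
                             - of_real (rho_deriv k \<theta>) * cis isoDelta"
proof -
  define g where "g j \<psi> = of_real (rho_deriv j \<psi>) * cis (\<theta> + isoDelta - \<psi>)" for j \<psi>
  define \<Phi> where "\<Phi> \<psi> = \<i> * g k \<psi>" for \<psi>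
  have "((\<lambda>\<psi>. g k \<psi> + \<i> * g (Suc k) \<psi>) has_integral \<Phi> (\<theta> + isoDelta) - \<Phi> \<theta>) {\<theta>..\<theta> + isoDelta}"
  proof (rule fundamental_theorem_of_calculus)
    fix x assume "x \<in> {\<theta>..\<theta> + isoDelta}"
    then have "x < 1/2" using assms by auto
    then have "(\<Phi> has_vector_derivative
        \<i> * (of_real (rho_deriv k x) * (\<i> * cis (\<theta> + isoDelta - x) * of_real (0 - 1))
             + of_real (rho_deriv (Suc k) x) * cis (\<theta> + isoDelta - x))) (at x)"
      unfolding \<Phi>_def g_def
      by (intro has_vector_derivative_mult_right has_vector_derivative_mult
          has_vector_derivative_of_real rho_deriv_has_real_derivative derivative_intros)
    then show "(\<Phi> has_vector_derivative g k x + \<i> * g (Suc k) x) (at x within {\<theta>..\<theta> + isoDelta})"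
      by (simp add: has_vector_derivative_at_within g_def algebra_simps)
  qed (use isoDelta_pos in auto)
  moreover have "((\<lambda>\<psi>. g k \<psi> + \<i> * g (Suc k) \<psi>) has_integral chord k \<theta> + \<i> * chord (Suc k) \<theta>)
      {\<theta>..\<theta> + isoDelta}"
    unfolding g_def using assms by (intro has_integral_add has_integral_mult_right chord_has_integral)
  ultimately have "\<Phi> (\<theta> + isoDelta) - \<Phi> \<theta> = chord k \<theta> + \<i> * chord (Suc k) \<theta>"
    by (rule has_integral_unique)
  then have "chord (Suc k) \<theta> = - \<i> * (\<Phi> (\<theta> + isoDelta) - \<Phi> \<theta> - chord k \<theta>)"
    by (auto simp: algebra_simps)
  then show ?thesis by (simp add: \<Phi>_def g_def algebra_simps)
qed

lemma chord_eq_oint0: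
  assumes "\<theta> < 1/2 - isoDelta"
  shows "chord k \<theta> = cis (\<theta> + isoDelta) *
    (oint0 (\<lambda>\<psi>. of_real (rho_deriv k \<psi>) * cis (- \<psi>)) (\<theta> + isoDelta)
     - oint0 (\<lambda>\<psi>. of_real (rho_deriv k \<psi>) * cis (- \<psi>)) \<theta>)"
proof -
  have "(\<lambda>\<psi>. of_real (rho_deriv k \<psi>) * cis (\<theta> + isoDelta - \<psi>))
      = (\<lambda>\<psi>. cis (\<theta> + isoDelta) * (of_real (rho_deriv k \<psi>) * cis (- \<psi>)))"
    by (simp add: fun_eq_iff cis_mult)
  then have "chord k \<theta>
      = cis (\<theta> + isoDelta) * integral {\<theta>..\<theta> + isoDelta} (\<lambda>\<psi>. of_real (rho_deriv k \<psi>) * cis (- \<psi>))"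
    by (simp add: chord_def)
  also have "integral {\<theta>..\<theta> + isoDelta} (\<lambda>\<psi>. of_real (rho_deriv k \<psi>) * cis (- \<psi>))
      = oint0 (\<lambda>\<psi>. of_real (rho_deriv k \<psi>) * cis (- \<psi>)) (\<theta> + isoDelta)
        - oint0 (\<lambda>\<psi>. of_real (rho_deriv k \<psi>) * cis (- \<psi>)) \<theta>"
    using assms isoDelta_pos by (intro oint0_diff[where c="1/2", symmetric] continuous_intros) auto
  finally show ?thesis .
qed

lemma chord_has_vector_derivative:
  assumes "\<theta> < 1/2 - isoDelta"
  shows "(chord k has_vector_derivative chord (Suc k) \<theta>) (at \<theta>)"
proof -
  define \<Phi> where "\<Phi> = oint0 (\<lambda>\<psi>. of_real (rho_deriv k \<psi>) * cis (- \<psi>))"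
  have \<Phi>: "(\<Phi> has_vector_derivative of_real (rho_deriv k x) * cis (- x)) (at x)" if "x < 1/2" for x
    unfolding \<Phi>_def using that
    by (intro oint0_has_vector_derivative[where c="1/2"] continuous_intros) auto
  have shift: "((\<lambda>x. x + isoDelta) has_real_derivative 1) (at \<theta>)"
    by (auto intro!: derivative_eq_intros)
  have "\<theta> + isoDelta < 1/2" using assms by simp
  from vector_diff_chain_at[OF shift[unfolded has_real_derivative_iff_has_vector_derivative] \<Phi>[OF this]]
  have \<Phi>_shift: "((\<lambda>x. \<Phi> (x + isoDelta)) has_vector_derivative
      of_real (rho_deriv k (\<theta> + isoDelta)) * cis (- (\<theta> + isoDelta))) (at \<theta>)"
    by (simp add: o_def)
  from has_vector_derivative_cis[OF shift]
  have cis_shift: "((\<lambda>x. cis (x + isoDelta)) has_vector_derivative \<i> * cis (\<theta> + isoDelta)) (at \<theta>)"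
    by simp
  have "((\<lambda>x. cis (x + isoDelta) * (\<Phi> (x + isoDelta) - \<Phi> x)) has_vector_derivative
      cis (\<theta> + isoDelta) * (of_real (rho_deriv k (\<theta> + isoDelta)) * cis (- (\<theta> + isoDelta))
                              - of_real (rho_deriv k \<theta>) * cis (- \<theta>))
      + \<i> * cis (\<theta> + isoDelta) * (\<Phi> (\<theta> + isoDelta) - \<Phi> \<theta>)) (at \<theta>)"
    (is "(_ has_vector_derivative ?D) _")
    using assms isoDelta_pos
    by (intro has_vector_derivative_mult has_vector_derivative_diff \<Phi>_shift \<Phi> cis_shift) auto
  moreover have "?D = chord (Suc k) \<theta>"
  proof -
    have "cis (- (\<theta> + isoDelta)) = 1 / cis (\<theta> + isoDelta)" "cis (- \<theta>) = cis isoDelta / cis (\<theta> + isoDelta)"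
      using cis_divide[of 0 "\<theta> + isoDelta"] cis_divide[of isoDelta "\<theta> + isoDelta"] by simp_all
    then show ?thesis
      unfolding chord_Suc[OF assms] chord_eq_oint0[OF assms, of k] \<Phi>_def
      by (simp add: field_simps) (simp add: mult.assoc[symmetric])
  qed
  ultimately have "((\<lambda>x. cis (x + isoDelta) * (\<Phi> (x + isoDelta) - \<Phi> x)) has_vector_derivative
      chord (Suc k) \<theta>) (at \<theta>)"
    by simp
  then show ?thesis
    by (rule has_vector_derivative_transform_within_open[of _ _ _ "{..<1/2 - isoDelta}"])
       (use assms in \<open>auto simp: chord_eq_oint0 \<Phi>_def\<close>)
qed

definition chord_dir :: complex where
  "chord_dir = \<i> - \<i> * cis isoDelta"

lemma cis_has_integral_chord_dir:
  "((\<lambda>\<psi>. cis (\<theta> + isoDelta - \<psi>)) has_integral chord_dir) {\<theta>..\<theta> + isoDelta}"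
proof -
  have "((\<lambda>\<psi>. cis (\<theta> + isoDelta - \<psi>)) has_integral
      \<i> * cis (\<theta> + isoDelta - (\<theta> + isoDelta)) - \<i> * cis (\<theta> + isoDelta - \<theta>)) {\<theta>..\<theta> + isoDelta}"
  proof (rule fundamental_theorem_of_calculus)
    fix x :: real
    have "((\<lambda>\<psi>. \<i> * cis (\<theta> + isoDelta - \<psi>)) has_vector_derivative
        \<i> * (\<i> * cis (\<theta> + isoDelta - x) * of_real (0 - 1))) (at x)"
      by (intro has_vector_derivative_mult_right derivative_intros)
    then show "((\<lambda>\<psi>. \<i> * cis (\<theta> + isoDelta - \<psi>)) has_vector_derivative cis (\<theta> + isoDelta - x))
        (at x within {\<theta>..\<theta> + isoDelta})"
      by (simp add: has_vector_derivative_at_within)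
  qed (use isoDelta_pos in auto)
  then show ?thesis by (simp add: chord_dir_def)
qed

lemma Im_chord_dir: "Im chord_dir = 3/2"
  by (simp add: chord_dir_def cos_isoDelta)

lemma cnj_chord_dir_mult: "cnj chord_dir * chord_dir = 3"
  by (simp add: chord_dir_def complex_eq_iff sin_isoDelta cos_isoDelta power2_eq_square algebra_simps)

lemma norm_chord_minus_chord_dir_le:
  assumes "\<theta> < 1/2 - isoDelta"
  shows "norm (chord k \<theta> - of_real (rho_deriv k \<theta>) * chord_dir)
           \<le> isoDelta * (rho_deriv k (\<theta> + isoDelta) - rho_deriv k \<theta>)"
  using mono_weight_integral_bounds(1)[OF rho_deriv_mono_on _ chord_has_integral[OF assms]
      cis_has_integral_chord_dir] assms isoDelta_pos
  by simp

lemma Im_chord_0_ge: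
  assumes "\<theta> < 1/2 - isoDelta"
  shows "3/2 * rho \<theta> \<le> Im (chord 0 \<theta>)"
  using mono_weight_integral_bounds(2)[OF rho_deriv_mono_on _ chord_has_integral[OF assms]
      cis_has_integral_chord_dir, of 0] assms isoDelta_pos isoDelta_le_pi
  by (simp add: sin_ge_zero Im_chord_dir rho_deriv_0)

lemma norm_chord_0_le:
  assumes "\<theta> < 1/2 - isoDelta"
  shows "norm (chord 0 \<theta>) \<le> sqrt (1 - 2*\<theta>)"
proof -
  define F :: "real \<Rightarrow> real" where "F \<psi> = - ((1 - 2*\<psi>) powr (1/2))" for \<psi>
  have ftc: "(rho has_integral F (\<theta> + isoDelta) - F \<theta>) {\<theta>..\<theta> + isoDelta}"
  proof (rule fundamental_theorem_of_calculus)
    fix x assume "x \<in> {\<theta>..\<theta> + isoDelta}"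
    then have "1 - 2*x > 0" using assms by auto
    then have "((\<lambda>\<psi>. (1 - 2*\<psi>) powr (1/2)) has_real_derivative
        1/2 * (1 - 2*x) powr (1/2 - of_nat 1) * (- 2)) (at x)"
      by (intro DERIV_fun_powr) (auto intro!: derivative_eq_intros)
    then have "(F has_real_derivative - (1/2 * (1 - 2*x) powr (1/2 - of_nat 1) * (- 2))) (at x)"
      unfolding F_def[abs_def] by (rule DERIV_minus)
    then show "(F has_vector_derivative rho x) (at x within {\<theta>..\<theta> + isoDelta})"
      by (simp add: rho_def has_real_derivative_iff_has_vector_derivative[symmetric]
          has_field_derivative_at_within)
  qed (use isoDelta_pos in auto)
  have "norm (chord 0 \<theta>) \<le> integral {\<theta>..\<theta> + isoDelta} rho"
    unfolding chord_def
  proof (rule integral_norm_bound_integral)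
    show "(\<lambda>\<psi>. of_real (rho_deriv 0 \<psi>) * cis (\<theta> + isoDelta - \<psi>)) integrable_on {\<theta>..\<theta> + isoDelta}"
      using chord_has_integral[OF assms] by blast
    show "norm (of_real (rho_deriv 0 x) * cis (\<theta> + isoDelta - x)) \<le> rho x"
      if "x \<in> {\<theta>..\<theta> + isoDelta}" for x
      using rho_pos[of x] that assms by (simp add: norm_mult rho_deriv_0)
  qed (use ftc in auto)
  also have "\<dots> \<le> (1 - 2*\<theta>) powr (1/2)"
    using integral_unique[OF ftc] by (simp add: F_def)
  finally show ?thesis using assms isoDelta_pos by (simp add: powr_half_sqrt)
qed

lemma chord_div_rho_deriv_tendsto: "((\<lambda>\<theta>. chord k \<theta> / of_real (rho_deriv k \<theta>)) \<longlongrightarrow> chord_dir) at_bot"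
proof -
  have "((\<lambda>\<theta>. isoDelta * (rho_deriv k (\<theta> + isoDelta) / rho_deriv k \<theta> - 1)) \<longlongrightarrow> isoDelta * (1 - 1)) at_bot"
    by (intro tendsto_intros rho_deriv_shift_ratio_tendsto)
  then have "((\<lambda>\<theta>. isoDelta * (rho_deriv k (\<theta> + isoDelta) / rho_deriv k \<theta> - 1)) \<longlongrightarrow> 0) at_bot"
    by simp
  then have "((\<lambda>\<theta>. chord k \<theta> / of_real (rho_deriv k \<theta>) - chord_dir) \<longlongrightarrow> 0) at_bot"
  proof (rule Lim_null_comparison[rotated])
    show "eventually (\<lambda>\<theta>. norm (chord k \<theta> / of_real (rho_deriv k \<theta>) - chord_dir)
        \<le> isoDelta * (rho_deriv k (\<theta> + isoDelta) / rho_deriv k \<theta> - 1)) at_bot"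
      using eventually_gt_at_bot[of "1/2 - isoDelta"]
    proof eventually_elim
      case (elim \<theta>)
      then have r: "rho_deriv k \<theta> > 0" by (intro rho_deriv_pos) (use isoDelta_pos in simp)
      have "chord k \<theta> / of_real (rho_deriv k \<theta>) - chord_dir
          = (chord k \<theta> - of_real (rho_deriv k \<theta>) * chord_dir) / of_real (rho_deriv k \<theta>)"
        using r by (simp add: field_simps)
      then have "norm (chord k \<theta> / of_real (rho_deriv k \<theta>) - chord_dir)
          = norm (chord k \<theta> - of_real (rho_deriv k \<theta>) * chord_dir) / rho_deriv k \<theta>"
        using r by (simp add: norm_divide)
      also have "\<dots> \<le> isoDelta * (rho_deriv k (\<theta> + isoDelta) - rho_deriv k \<theta>) / rho_deriv k \<theta>"
        using norm_chord_minus_chord_dir_le[OF elim] r by (simp add: divide_right_mono)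
      finally show ?case using r by (simp add: field_simps)
    qed
  qed
  then show ?thesis by (simp add: LIM_zero_iff)
qed

section \<open>Speed and curvature of the isoptic\<close>

lemma isopticI_eq_chord:
  assumes "\<theta> < 1/2 - isoDelta"
  shows "isopticI \<theta> = clothoidP \<theta> + of_real (Im (chord 0 \<theta>) / sin isoDelta) * cis \<theta>"
proof -
  define V where "V = clothoidP (\<theta> + isoDelta) - clothoidP \<theta>"
  have "Im (chord 0 \<theta>) = Re V * sin (\<theta> + isoDelta) - Im V * cos (\<theta> + isoDelta)"
    by (simp add: chord_0_eq[OF assms] V_def algebra_simps)
  then show ?thesis by (simp add: isopticI_def V_def)
qed

lemma isopticI_has_vector_derivative:
  assumes "\<theta> < 1/2 - isoDelta"
  shows "(isopticI has_vector_derivative cis \<theta> * chord 0 \<theta> / of_real (sin isoDelta)) (at \<theta>)"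
proof -
  have \<theta>: "\<theta> < 1/2" using assms isoDelta_pos by simp
  have "((\<lambda>\<theta>. Im (chord 0 \<theta>) / sin isoDelta) has_real_derivative Im (chord 1 \<theta>) / sin isoDelta) (at \<theta>)"
    using chord_has_vector_derivative[OF assms, of 0]
    by (intro DERIV_cdivide has_field_derivative_Im) simp
  then have "((\<lambda>\<theta>. clothoidP \<theta> + of_real (Im (chord 0 \<theta>) / sin isoDelta) * cis \<theta>) has_vector_derivative
      of_real (rho \<theta>) * cis \<theta> + (of_real (Im (chord 0 \<theta>) / sin isoDelta) * (\<i> * cis \<theta> * of_real 1)
      + of_real (Im (chord 1 \<theta>) / sin isoDelta) * cis \<theta>)) (at \<theta>)"
    (is "(_ has_vector_derivative ?D) _")
    by (intro has_vector_derivative_add has_vector_derivative_mult has_vector_derivative_of_real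
        clothoidP_has_vector_derivative \<theta> has_vector_derivative_cis DERIV_ident)
  moreover have "?D = cis \<theta> * chord 0 \<theta> / of_real (sin isoDelta)"
    using sin_isoDelta_pos
    by (simp add: chord_Suc[OF assms, of 0] rho_deriv_0 complex_eq_iff field_simps)
  ultimately have "((\<lambda>\<theta>. clothoidP \<theta> + of_real (Im (chord 0 \<theta>) / sin isoDelta) * cis \<theta>)
      has_vector_derivative cis \<theta> * chord 0 \<theta> / of_real (sin isoDelta)) (at \<theta>)"
    by simp
  then show ?thesis
    by (rule has_vector_derivative_transform_within_open[of _ _ _ "{..<1/2 - isoDelta}"])
       (use assms isopticI_eq_chord in auto)
qed

lemma dcurve_isopticI:
  "\<theta> < 1/2 - isoDelta \<Longrightarrow> dcurve isopticI \<theta> = cis \<theta> * chord 0 \<theta> / of_real (sin isoDelta)"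
  by (simp add: dcurve_def vector_derivative_at isopticI_has_vector_derivative)

lemma dcurve_dcurve_isopticI:
  assumes "\<theta> < 1/2 - isoDelta"
  shows "dcurve (dcurve isopticI) \<theta> = cis \<theta> * (\<i> * chord 0 \<theta> + chord 1 \<theta>) / of_real (sin isoDelta)"
proof -
  have "((\<lambda>\<theta>. cis \<theta> * chord 0 \<theta> / of_real (sin isoDelta)) has_vector_derivative
      (cis \<theta> * chord 1 \<theta> + \<i> * cis \<theta> * of_real 1 * chord 0 \<theta>) / of_real (sin isoDelta)) (at \<theta>)"
    using chord_has_vector_derivative[OF assms, of 0, unfolded One_nat_def[symmetric]]
    by (intro has_vector_derivative_divide has_vector_derivative_mult has_vector_derivative_cis DERIV_ident)
  then have "((\<lambda>\<theta>. cis \<theta> * chord 0 \<theta> / of_real (sin isoDelta)) has_vector_derivative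
      cis \<theta> * (\<i> * chord 0 \<theta> + chord 1 \<theta>) / of_real (sin isoDelta)) (at \<theta>)"
    by (simp add: algebra_simps)
  then have "(dcurve isopticI has_vector_derivative
      cis \<theta> * (\<i> * chord 0 \<theta> + chord 1 \<theta>) / of_real (sin isoDelta)) (at \<theta>)"
    by (rule has_vector_derivative_transform_within_open[of _ _ _ "{..<1/2 - isoDelta}"])
       (use assms dcurve_isopticI in auto)
  then show ?thesis by (simp add: dcurve_def[of "dcurve isopticI"] vector_derivative_at)
qed

definition chord_prod :: "nat \<Rightarrow> nat \<Rightarrow> real \<Rightarrow> complex" where
  "chord_prod j k \<theta> = cnj (chord j \<theta>) * chord k \<theta>"

text \<open>\<open>isoN\<close> is \<open>(sin \<delta> \<cdot> speed)\<^sup>2\<close> and \<open>isoQ\<close> is \<open>sin\<^sup>2 \<delta>\<close> times the cross product \<open>I' \<times> I''\<close>;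
  trailing digits count derivatives, and \<open>isoL\<close> is the logarithmic derivative of the radius of
  curvature \<open>isoR\<close>.\<close>

definition isoN :: "real \<Rightarrow> real" where
  "isoN \<theta> = Re (chord_prod 0 0 \<theta>)"
definition isoN1 :: "real \<Rightarrow> real" where
  "isoN1 \<theta> = Re (chord_prod 1 0 \<theta> + chord_prod 0 1 \<theta>)"
definition isoN2 :: "real \<Rightarrow> real" where
  "isoN2 \<theta> = Re (chord_prod 2 0 \<theta> + 2 * chord_prod 1 1 \<theta> + chord_prod 0 2 \<theta>)"
definition isoQ :: "real \<Rightarrow> real" where
  "isoQ \<theta> = isoN \<theta> + Im (chord_prod 0 1 \<theta>)"
definition isoQ1 :: "real \<Rightarrow> real" where
  "isoQ1 \<theta> = isoN1 \<theta> + Im (chord_prod 1 1 \<theta> + chord_prod 0 2 \<theta>)"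
definition isoQ2 :: "real \<Rightarrow> real" where
  "isoQ2 \<theta> = isoN2 \<theta> + Im (chord_prod 2 1 \<theta> + 2 * chord_prod 1 2 \<theta> + chord_prod 0 3 \<theta>)"
definition isoL :: "real \<Rightarrow> real" where
  "isoL \<theta> = 3/2 * (isoN1 \<theta> / isoN \<theta>) - isoQ1 \<theta> / isoQ \<theta>"
definition isoL1 :: "real \<Rightarrow> real" where
  "isoL1 \<theta> = 3/2 * (isoN2 \<theta> / isoN \<theta> - (isoN1 \<theta> / isoN \<theta>)\<^sup>2) - (isoQ2 \<theta> / isoQ \<theta> - (isoQ1 \<theta> / isoQ \<theta>)\<^sup>2)"
definition isoS :: "real \<Rightarrow> real" where
  "isoS \<theta> = sqrt (isoN \<theta>) / sin isoDelta"
definition isoR :: "real \<Rightarrow> real" where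
  "isoR \<theta> = sqrt (isoN \<theta> ^ 3 / isoQ \<theta> ^ 2) / sin isoDelta"

lemma isoN_eq: "isoN \<theta> = (norm (chord 0 \<theta>))\<^sup>2"
  unfolding isoN_def chord_prod_def mult.commute[of "cnj _"] complex_norm_square[symmetric] by simp

lemma isoR_eq: "isoR \<theta> = sqrt (isoN \<theta>) ^ 3 / \<bar>isoQ \<theta>\<bar> / sin isoDelta"
  by (simp add: isoR_def real_sqrt_divide real_sqrt_power flip: real_sqrt_abs)

lemma speed_isopticI: "\<theta> < 1/2 - isoDelta \<Longrightarrow> speed isopticI \<theta> = isoS \<theta>"
  using sin_isoDelta_pos
  by (simp add: speed_def dcurve_isopticI isoS_def isoN_eq norm_mult norm_divide)

lemma radius_curv_isopticI:
  assumes "\<theta> < 1/2 - isoDelta"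
  shows "radius_curv isopticI \<theta> = isoR \<theta>"
proof -
  have "cnj (dcurve isopticI \<theta>) * dcurve (dcurve isopticI) \<theta>
      = (cnj (cis \<theta>) * cis \<theta>) * (cnj (chord 0 \<theta>) * (\<i> * chord 0 \<theta> + chord 1 \<theta>)) / of_real ((sin isoDelta)\<^sup>2)"
    using assms by (simp add: dcurve_isopticI dcurve_dcurve_isopticI power2_eq_square)
  also have "cnj (cis \<theta>) * cis \<theta> = 1" by (simp add: cis_cnj cis_mult)
  finally have cross:
      "Im (cnj (dcurve isopticI \<theta>) * dcurve (dcurve isopticI) \<theta>) = isoQ \<theta> / (sin isoDelta)\<^sup>2"
    by (simp add: isoQ_def isoN_def chord_prod_def algebra_simps Im_divide_of_real)
  have "radius_curv isopticI \<theta> = (sqrt (isoN \<theta>) / sin isoDelta) ^ 3 / \<bar>isoQ \<theta> / (sin isoDelta)\<^sup>2\<bar>"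
    unfolding radius_curv_def speed_isopticI[OF assms] isoS_def cross ..
  also have "\<dots> = sqrt (isoN \<theta>) ^ 3 / \<bar>isoQ \<theta>\<bar> / sin isoDelta"
    using sin_isoDelta_pos
    by (cases "isoQ \<theta> = 0") (simp_all add: abs_divide power_divide field_simps power3_eq_cube power2_eq_square)
  also have "\<dots> = isoR \<theta>"
    by (rule isoR_eq[symmetric])
  finally show ?thesis .
qed

lemma chord_prod_has_vector_derivative:
  assumes "\<theta> < 1/2 - isoDelta"
  shows "(chord_prod j k has_vector_derivative chord_prod (Suc j) k \<theta> + chord_prod j (Suc k) \<theta>) (at \<theta>)"
proof -
  have "((\<lambda>\<theta>. cnj (chord j \<theta>) * chord k \<theta>) has_vector_derivative
      cnj (chord j \<theta>) * chord (Suc k) \<theta> + cnj (chord (Suc j) \<theta>) * chord k \<theta>) (at \<theta>)"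
    by (intro has_vector_derivative_mult has_vector_derivative_cnj chord_has_vector_derivative assms)
  then show ?thesis by (simp add: chord_prod_def[abs_def] add.commute)
qed

lemma isoN_has_real_derivative: "\<theta> < 1/2 - isoDelta \<Longrightarrow> (isoN has_real_derivative isoN1 \<theta>) (at \<theta>)"
  unfolding isoN_def[abs_def] isoN1_def
  using has_field_derivative_Re[OF chord_prod_has_vector_derivative[of \<theta> 0 0]] by simp

lemma isoN1_has_real_derivative: "\<theta> < 1/2 - isoDelta \<Longrightarrow> (isoN1 has_real_derivative isoN2 \<theta>) (at \<theta>)"
  unfolding isoN1_def[abs_def]
  by (rule DERIV_cong[OF has_field_derivative_Re[OF has_vector_derivative_add[OF
        chord_prod_has_vector_derivative chord_prod_has_vector_derivative]]])
     (simp_all add: isoN2_def eval_nat_numeral algebra_simps)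

lemma isoQ_has_real_derivative: "\<theta> < 1/2 - isoDelta \<Longrightarrow> (isoQ has_real_derivative isoQ1 \<theta>) (at \<theta>)"
  unfolding isoQ_def[abs_def]
  by (rule DERIV_cong[OF DERIV_add[OF isoN_has_real_derivative
        has_field_derivative_Im[OF chord_prod_has_vector_derivative]]])
     (simp_all add: isoQ1_def eval_nat_numeral)

lemma isoQ1_has_real_derivative: "\<theta> < 1/2 - isoDelta \<Longrightarrow> (isoQ1 has_real_derivative isoQ2 \<theta>) (at \<theta>)"
  unfolding isoQ1_def[abs_def]
  by (rule DERIV_cong[OF DERIV_add[OF isoN1_has_real_derivative
        has_field_derivative_Im[OF has_vector_derivative_add[OF
          chord_prod_has_vector_derivative chord_prod_has_vector_derivative]]]])
     (simp_all add: isoQ2_def eval_nat_numeral algebra_simps)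

lemma isoL_has_real_derivative:
  assumes "\<theta> < 1/2 - isoDelta" "isoN \<theta> \<noteq> 0" "isoQ \<theta> \<noteq> 0"
  shows "(isoL has_real_derivative isoL1 \<theta>) (at \<theta>)"
proof -
  have "(isoL has_real_derivative 3/2 * ((isoN2 \<theta> * isoN \<theta> - isoN1 \<theta> * isoN1 \<theta>) / (isoN \<theta> * isoN \<theta>))
      - (isoQ2 \<theta> * isoQ \<theta> - isoQ1 \<theta> * isoQ1 \<theta>) / (isoQ \<theta> * isoQ \<theta>)) (at \<theta>)"
    unfolding isoL_def[abs_def]
    by (intro DERIV_diff DERIV_cmult DERIV_divide isoN_has_real_derivative isoN1_has_real_derivative
        isoQ_has_real_derivative isoQ1_has_real_derivative assms)
  then show ?thesis
    using assms by (simp add: isoL1_def field_simps power2_eq_square)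
qed

lemma isoR_has_real_derivative:
  assumes "\<theta> < 1/2 - isoDelta" "isoN \<theta> > 0" "isoQ \<theta> \<noteq> 0"
  shows "(isoR has_real_derivative isoR \<theta> * isoL \<theta>) (at \<theta>)"
proof -
  define K where "K = isoN \<theta> ^ 3 / isoQ \<theta> ^ 2"
  define K' where "K' = (3 * isoN \<theta> ^ 2 * isoN1 \<theta> * isoQ \<theta> ^ 2 - isoN \<theta> ^ 3 * (2 * isoQ \<theta> * isoQ1 \<theta>))
                         / (isoQ \<theta> ^ 2) ^ 2"
  have K: "K > 0" using assms by (simp add: K_def)
  have "((\<lambda>\<theta>. isoN \<theta> ^ 3 / isoQ \<theta> ^ 2) has_real_derivative K') (at \<theta>)"
    unfolding K'_def using assms
    by (auto intro!: derivative_eq_intros isoN_has_real_derivative isoQ_has_real_derivative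
        simp: power2_eq_square power3_eq_cube)
  from DERIV_chain2[OF DERIV_real_sqrt[OF K[unfolded K_def]] this]
  have "(isoR has_real_derivative inverse (sqrt K) / 2 * K' / sin isoDelta) (at \<theta>)"
    unfolding isoR_def[abs_def] by (intro DERIV_cdivide) (simp add: K_def)
  moreover have "inverse (sqrt K) / 2 * K' / sin isoDelta = isoR \<theta> * isoL \<theta>"
  proof -
    have "inverse (sqrt K) / 2 * K' = sqrt K * (K' / (2 * K))"
      using K by (simp add: field_simps flip: real_sqrt_mult)
    also have "K' / (2 * K) = isoL \<theta>"
      using assms by (simp add: K'_def K_def isoL_def field_simps power2_eq_square power3_eq_cube)
    finally show ?thesis by (simp add: isoR_def K_def)
  qed
  ultimately show ?thesis by simp
qed

lemma radius_curv_isopticI_has_real_derivative: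
  assumes "\<theta> < 1/2 - isoDelta" "isoN \<theta> > 0" "isoQ \<theta> \<noteq> 0"
  shows "(radius_curv isopticI has_real_derivative isoR \<theta> * isoL \<theta>) (at \<theta>)"
  by (rule has_field_derivative_transform_within_open[OF isoR_has_real_derivative[OF assms],
        of "{..<1/2 - isoDelta}"])
     (use assms radius_curv_isopticI in auto)

lemma isoR_pos: "isoN \<theta> > 0 \<Longrightarrow> isoQ \<theta> \<noteq> 0 \<Longrightarrow> isoR \<theta> > 0"
  using sin_isoDelta_pos by (simp add: isoR_def)

definition iso_lcg_x :: "real \<Rightarrow> real" where
  "iso_lcg_x \<theta> = ln (isoR \<theta>)"

definition iso_lcg_y :: "real \<Rightarrow> real" where
  "iso_lcg_y \<theta> = ln (isoN \<theta>) / 2 - ln (sin isoDelta) - ln (isoL \<theta>)"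

lemma lcg_isopticI:
  assumes "\<theta> < 1/2 - isoDelta" "isoN \<theta> > 0" "isoQ \<theta> \<noteq> 0" "isoL \<theta> > 0"
  shows "lcg_x isopticI \<theta> = iso_lcg_x \<theta>" "lcg_y isopticI \<theta> = iso_lcg_y \<theta>"
proof -
  have "(radius_curv isopticI has_real_derivative radius_curv isopticI \<theta> * isoL \<theta>) (at \<theta>)"
    using radius_curv_isopticI_has_real_derivative[OF assms(1-3)] by (simp add: radius_curv_isopticI assms)
  from lcg_y_eq_ln_speed_div[OF this] show "lcg_y isopticI \<theta> = iso_lcg_y \<theta>"
    using isoR_pos assms sin_isoDelta_pos
    by (simp add: radius_curv_isopticI speed_isopticI iso_lcg_y_def isoS_def ln_div ln_mult ln_sqrt)
  show "lcg_x isopticI \<theta> = iso_lcg_x \<theta>"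
    using assms by (simp add: lcg_x_def iso_lcg_x_def radius_curv_isopticI)
qed

lemma iso_lcg_x_has_real_derivative:
  assumes "\<theta> < 1/2 - isoDelta" "isoN \<theta> > 0" "isoQ \<theta> \<noteq> 0"
  shows "(iso_lcg_x has_real_derivative isoL \<theta>) (at \<theta>)"
  using isoR_pos[OF assms(2,3)] unfolding iso_lcg_x_def[abs_def]
  by (auto intro!: derivative_eq_intros isoR_has_real_derivative assms)

lemma iso_lcg_y_has_real_derivative:
  assumes "\<theta> < 1/2 - isoDelta" "isoN \<theta> > 0" "isoQ \<theta> \<noteq> 0" "isoL \<theta> > 0"
  shows "(iso_lcg_y has_real_derivative isoN1 \<theta> / (2 * isoN \<theta>) - isoL1 \<theta> / isoL \<theta>) (at \<theta>)"
  unfolding iso_lcg_y_def[abs_def] using assms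
  by (auto intro!: derivative_eq_intros isoN_has_real_derivative isoL_has_real_derivative)

section \<open>Asymptotics as \<open>\<theta> \<rightarrow> -\<infinity>\<close>\<close>

definition chord_nprod :: "nat \<Rightarrow> nat \<Rightarrow> real \<Rightarrow> complex" where
  "chord_nprod j k \<theta> = cnj (chord j \<theta> / of_real (rho_deriv j \<theta>)) * (chord k \<theta> / of_real (rho_deriv k \<theta>))"

lemma chord_nprod_tendsto: "(chord_nprod j k \<longlongrightarrow> 3) at_bot"
proof -
  have "(chord_nprod j k \<longlongrightarrow> cnj chord_dir * chord_dir) at_bot"
    unfolding chord_nprod_def[abs_def] by (intro tendsto_intros chord_div_rho_deriv_tendsto)
  then show ?thesis by (simp add: cnj_chord_dir_mult)
qed

lemma chord_prod_eq_scaled: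
  assumes "\<theta> < 1/2"
  shows "chord_prod j k \<theta>
           = of_real (odd_double_fact j * odd_double_fact k * rho \<theta> ^ 2 * tau \<theta> ^ (j + k)) * chord_nprod j k \<theta>"
proof -
  have "rho_deriv j \<theta> > 0" "rho_deriv k \<theta> > 0" using rho_deriv_pos assms by auto
  then have "chord_prod j k \<theta> = of_real (rho_deriv j \<theta> * rho_deriv k \<theta>) * chord_nprod j k \<theta>"
    by (simp add: chord_prod_def chord_nprod_def)
  then show ?thesis
    using assms by (simp add: rho_deriv_eq_scaled power_add power2_eq_square)
qed

lemma iso_eq_scaled:
  assumes "\<theta> < 1/2"
  defines "w \<equiv> \<lambda>j k. chord_nprod j k \<theta>"
  shows "isoN \<theta> = rho \<theta> ^ 2 * Re (w 0 0)"
    and "isoQ \<theta> = rho \<theta> ^ 2 * (Re (w 0 0) + tau \<theta> * Im (w 0 1))"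
    and "isoN1 \<theta> = rho \<theta> ^ 2 * tau \<theta> * Re (w 1 0 + w 0 1)"
    and "isoQ1 \<theta> = rho \<theta> ^ 2 * tau \<theta> * (Re (w 1 0 + w 0 1) + tau \<theta> * Im (w 1 1 + 3 * w 0 2))"
    and "isoN2 \<theta> = rho \<theta> ^ 2 * tau \<theta> ^ 2 * Re (3 * w 2 0 + 2 * w 1 1 + 3 * w 0 2)"
    and "isoQ2 \<theta> = rho \<theta> ^ 2 * tau \<theta> ^ 2 * (Re (3 * w 2 0 + 2 * w 1 1 + 3 * w 0 2)
           + tau \<theta> * Im (3 * w 2 1 + 6 * w 1 2 + 15 * w 0 3))"
  using assms
  by (simp_all add: isoN_def isoN1_def isoN2_def isoQ_def isoQ1_def isoQ2_def chord_prod_eq_scaled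
      eval_nat_numeral algebra_simps power2_eq_square power3_eq_cube)

lemma iso_ratio_tendsto:
  shows "((\<lambda>\<theta>. isoN \<theta> / rho \<theta> ^ 2) \<longlongrightarrow> 3) at_bot"
    and "((\<lambda>\<theta>. isoQ \<theta> / rho \<theta> ^ 2) \<longlongrightarrow> 3) at_bot"
    and "((\<lambda>\<theta>. isoN1 \<theta> / (tau \<theta> * isoN \<theta>)) \<longlongrightarrow> 2) at_bot"
    and "((\<lambda>\<theta>. isoQ1 \<theta> / (tau \<theta> * isoQ \<theta>)) \<longlongrightarrow> 2) at_bot"
    and "((\<lambda>\<theta>. isoN2 \<theta> / (tau \<theta> ^ 2 * isoN \<theta>)) \<longlongrightarrow> 8) at_bot"
    and "((\<lambda>\<theta>. isoQ2 \<theta> / (tau \<theta> ^ 2 * isoQ \<theta>)) \<longlongrightarrow> 8) at_bot"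
proof -
  define w where "w j k \<theta> = chord_nprod j k \<theta>" for j k \<theta>
  note lim = chord_nprod_tendsto tendsto_Re[OF chord_nprod_tendsto] tendsto_Im[OF chord_nprod_tendsto] tau_tendsto
  have transfer: "(g \<longlongrightarrow> b) at_bot"
    if "(f \<longlongrightarrow> a) at_bot" "a = b" "\<And>\<theta>. \<theta> < 1/2 \<Longrightarrow> f \<theta> = g \<theta>" for f g :: "real \<Rightarrow> real" and a b
  proof (rule Lim_transform_eventually)
    show "(f \<longlongrightarrow> b) at_bot" using that(1,2) by simp
    show "eventually (\<lambda>\<theta>. f \<theta> = g \<theta>) at_bot"
      using eventually_gt_at_bot[of "1/2"] by eventually_elim (rule that(3))
  qed
  have "\<theta> < 1/2 \<Longrightarrow> rho \<theta> \<noteq> 0 \<and> tau \<theta> \<noteq> 0" for \<theta>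
    using rho_pos[of \<theta>] tau_pos[of \<theta>] by simp
  note scaled = conjunct1[OF this] conjunct2[OF this] iso_eq_scaled w_def
  have "((\<lambda>\<theta>. Re (w 0 0 \<theta>)) \<longlongrightarrow> Re 3) at_bot"
    unfolding w_def by (intro tendsto_intros lim)
  then show "((\<lambda>\<theta>. isoN \<theta> / rho \<theta> ^ 2) \<longlongrightarrow> 3) at_bot"
    by (rule transfer) (simp_all add: scaled)
  have "((\<lambda>\<theta>. Re (w 0 0 \<theta>) + tau \<theta> * Im (w 0 1 \<theta>)) \<longlongrightarrow> Re 3 + 0 * Im 3) at_bot"
    unfolding w_def by (intro tendsto_intros lim)
  then show "((\<lambda>\<theta>. isoQ \<theta> / rho \<theta> ^ 2) \<longlongrightarrow> 3) at_bot"
    by (rule transfer) (simp_all add: scaled)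
  have "((\<lambda>\<theta>. Re (w 1 0 \<theta> + w 0 1 \<theta>) / Re (w 0 0 \<theta>)) \<longlongrightarrow> Re (3 + 3) / Re 3) at_bot"
    unfolding w_def by (intro tendsto_intros lim) simp
  then show "((\<lambda>\<theta>. isoN1 \<theta> / (tau \<theta> * isoN \<theta>)) \<longlongrightarrow> 2) at_bot"
    by (rule transfer) (simp_all add: scaled)
  have "((\<lambda>\<theta>. (Re (w 1 0 \<theta> + w 0 1 \<theta>) + tau \<theta> * Im (w 1 1 \<theta> + 3 * w 0 2 \<theta>))
      / (Re (w 0 0 \<theta>) + tau \<theta> * Im (w 0 1 \<theta>)))
      \<longlongrightarrow> (Re (3 + 3) + 0 * Im (3 + 3 * 3)) / (Re 3 + 0 * Im 3)) at_bot"
    unfolding w_def by (intro tendsto_intros lim) simp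
  then show "((\<lambda>\<theta>. isoQ1 \<theta> / (tau \<theta> * isoQ \<theta>)) \<longlongrightarrow> 2) at_bot"
    by (rule transfer) (simp_all add: scaled)
  have "((\<lambda>\<theta>. Re (3 * w 2 0 \<theta> + 2 * w 1 1 \<theta> + 3 * w 0 2 \<theta>) / Re (w 0 0 \<theta>))
      \<longlongrightarrow> Re (3 * 3 + 2 * 3 + 3 * 3) / Re 3) at_bot"
    unfolding w_def by (intro tendsto_intros lim) simp
  then show "((\<lambda>\<theta>. isoN2 \<theta> / (tau \<theta> ^ 2 * isoN \<theta>)) \<longlongrightarrow> 8) at_bot"
    by (rule transfer) (simp_all add: scaled)
  have "((\<lambda>\<theta>. (Re (3 * w 2 0 \<theta> + 2 * w 1 1 \<theta> + 3 * w 0 2 \<theta>)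
        + tau \<theta> * Im (3 * w 2 1 \<theta> + 6 * w 1 2 \<theta> + 15 * w 0 3 \<theta>)) / (Re (w 0 0 \<theta>) + tau \<theta> * Im (w 0 1 \<theta>)))
      \<longlongrightarrow> (Re (3 * 3 + 2 * 3 + 3 * 3) + 0 * Im (3 * 3 + 6 * 3 + 15 * 3)) / (Re 3 + 0 * Im 3)) at_bot"
    unfolding w_def by (intro tendsto_intros lim) simp
  then show "((\<lambda>\<theta>. isoQ2 \<theta> / (tau \<theta> ^ 2 * isoQ \<theta>)) \<longlongrightarrow> 8) at_bot"
    by (rule transfer) (simp_all add: scaled)
qed

lemma isoL_div_tau_tendsto: "((\<lambda>\<theta>. isoL \<theta> / tau \<theta>) \<longlongrightarrow> 1) at_bot"
proof -
  have "((\<lambda>\<theta>. 3/2 * (isoN1 \<theta> / (tau \<theta> * isoN \<theta>)) - isoQ1 \<theta> / (tau \<theta> * isoQ \<theta>)) \<longlongrightarrow> 3/2 * 2 - 2) at_bot"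
    by (intro tendsto_intros iso_ratio_tendsto)
  then show ?thesis
    by (simp add: isoL_def diff_divide_distrib ac_simps)
qed

lemma isoL1_div_tau2_tendsto: "((\<lambda>\<theta>. isoL1 \<theta> / tau \<theta> ^ 2) \<longlongrightarrow> 2) at_bot"
proof -
  have "((\<lambda>\<theta>. 3/2 * (isoN2 \<theta> / (tau \<theta> ^ 2 * isoN \<theta>) - (isoN1 \<theta> / (tau \<theta> * isoN \<theta>))\<^sup>2)
      - (isoQ2 \<theta> / (tau \<theta> ^ 2 * isoQ \<theta>) - (isoQ1 \<theta> / (tau \<theta> * isoQ \<theta>))\<^sup>2)) \<longlongrightarrow> 3/2 * (8 - 2\<^sup>2) - (8 - 2\<^sup>2)) at_bot"
    by (intro tendsto_intros iso_ratio_tendsto)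
  then show ?thesis
    by (simp add: isoL1_def diff_divide_distrib power_divide power_mult_distrib ac_simps)
qed

lemma isoN_isoQ_isoL_eventually_pos:
  "eventually (\<lambda>\<theta>. \<theta> < 1/2 - isoDelta \<and> isoN \<theta> > 0 \<and> isoQ \<theta> > 0 \<and> isoL \<theta> > 0) at_bot"
proof -
  have "eventually (\<lambda>\<theta>. isoN \<theta> / rho \<theta> ^ 2 > 0 \<and> isoQ \<theta> / rho \<theta> ^ 2 > 0 \<and> isoL \<theta> / tau \<theta> > 0) at_bot"
    using iso_ratio_tendsto(1,2) isoL_div_tau_tendsto
    by (intro eventually_conj order_tendstoD(1)) auto
  then show ?thesis
    using eventually_gt_at_bot[of "1/2 - isoDelta"]
  proof eventually_elim
    case (elim \<theta>)
    then have "rho \<theta> > 0" "tau \<theta> > 0" using isoDelta_pos by (auto intro: rho_pos tau_pos)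
    with elim show ?case by (simp add: zero_less_divide_iff)
  qed
qed

definition lcg_tangent_slope :: "real \<Rightarrow> real" where
  "lcg_tangent_slope \<theta> = (isoN1 \<theta> / (2 * isoN \<theta>) - isoL1 \<theta> / isoL \<theta>) / isoL \<theta>"

lemma lcg_tangent_slope_tendsto: "(lcg_tangent_slope \<longlongrightarrow> -1) at_bot"
proof -
  define E where "E \<theta> = (isoN1 \<theta> / (tau \<theta> * isoN \<theta>) / 2 - (isoL1 \<theta> / tau \<theta> ^ 2) / (isoL \<theta> / tau \<theta>))
                         / (isoL \<theta> / tau \<theta>)" for \<theta>
  have "(E \<longlongrightarrow> (2 / 2 - 2 / 1) / 1) at_bot"
    unfolding E_def[abs_def]
    by (intro tendsto_intros iso_ratio_tendsto isoL_div_tau_tendsto isoL1_div_tau2_tendsto) auto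
  moreover have "eventually (\<lambda>\<theta>. E \<theta> = lcg_tangent_slope \<theta>) at_bot"
    using eventually_gt_at_bot[of "1/2"]
  proof eventually_elim
    case (elim \<theta>)
    then have "tau \<theta> \<noteq> 0" using tau_pos[of \<theta>] by simp
    then show ?case
      by (cases "isoL \<theta> = 0") (simp_all add: E_def lcg_tangent_slope_def field_simps power2_eq_square)
  qed
  ultimately show ?thesis
    by (auto elim: Lim_transform_eventually)
qed

theorem isopticI_lcg_slope_tendsto:
  "((\<lambda>\<theta>. (lcg_y isopticI \<theta> - lcg_y isopticI (\<theta> - pi)) / (lcg_x isopticI \<theta> - lcg_x isopticI (\<theta> - pi)))
     \<longlongrightarrow> -1) at_bot"
proof -
  obtain M where M: "\<And>\<theta>. \<theta> \<le> M \<Longrightarrow> \<theta> < 1/2 - isoDelta \<and> isoN \<theta> > 0 \<and> isoQ \<theta> > 0 \<and> isoL \<theta> > 0"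
    using isoN_isoQ_isoL_eventually_pos by (auto simp: eventually_at_bot_linorder)
  have "((\<lambda>\<theta>. (iso_lcg_y \<theta> - iso_lcg_y (\<theta> - pi)) / (iso_lcg_x \<theta> - iso_lcg_x (\<theta> - pi))) \<longlongrightarrow> -1) at_bot"
  proof (rule difference_quotient_tendsto_at_bot[where f' = isoL])
    show "eventually (\<lambda>\<theta>. (iso_lcg_x has_real_derivative isoL \<theta>) (at \<theta>) \<and>
        (iso_lcg_y has_real_derivative isoN1 \<theta> / (2 * isoN \<theta>) - isoL1 \<theta> / isoL \<theta>) (at \<theta>) \<and>
        isoL \<theta> > 0) at_bot"
      using M by (intro eventually_at_bot_linorderI[of M])
        (auto intro!: iso_lcg_x_has_real_derivative iso_lcg_y_has_real_derivative dest!: M)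
    show "((\<lambda>\<theta>. (isoN1 \<theta> / (2 * isoN \<theta>) - isoL1 \<theta> / isoL \<theta>) / isoL \<theta>) \<longlongrightarrow> -1) at_bot"
      using lcg_tangent_slope_tendsto by (simp add: lcg_tangent_slope_def[abs_def])
  qed simp
  moreover have "eventually (\<lambda>\<theta>. (iso_lcg_y \<theta> - iso_lcg_y (\<theta> - pi)) / (iso_lcg_x \<theta> - iso_lcg_x (\<theta> - pi))
      = (lcg_y isopticI \<theta> - lcg_y isopticI (\<theta> - pi)) / (lcg_x isopticI \<theta> - lcg_x isopticI (\<theta> - pi))) at_bot"
  proof (rule eventually_at_bot_linorderI[of M])
    fix \<theta> assume "\<theta> \<le> M"
    moreover have "\<theta> - pi \<le> M" using \<open>\<theta> \<le> M\<close> pi_gt_zero by linarith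
    ultimately have "\<theta> < 1/2 - isoDelta" "isoN \<theta> > 0" "isoQ \<theta> \<noteq> 0" "isoL \<theta> > 0"
      and "\<theta> - pi < 1/2 - isoDelta" "isoN (\<theta> - pi) > 0" "isoQ (\<theta> - pi) \<noteq> 0" "isoL (\<theta> - pi) > 0"
      using M[of \<theta>] M[of "\<theta> - pi"] by auto
    then show "(iso_lcg_y \<theta> - iso_lcg_y (\<theta> - pi)) / (iso_lcg_x \<theta> - iso_lcg_x (\<theta> - pi))
      = (lcg_y isopticI \<theta> - lcg_y isopticI (\<theta> - pi)) / (lcg_x isopticI \<theta> - lcg_x isopticI (\<theta> - pi))"
      by (simp add: lcg_isopticI)
  qed
  ultimately show ?thesis
    by (rule Lim_transform_eventually)
qed

section \<open>Blow-up of the curvature at the end of the parameter range\<close>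

lemma isoQ_eq_chord_0:
  assumes "\<theta> < 1/2 - isoDelta"
  shows "isoQ \<theta> = 2 * isoN \<theta> - rho (\<theta> + isoDelta) * Im (chord 0 \<theta>)
                    - rho \<theta> * Im (cnj (chord 0 \<theta>) * cis isoDelta)"
  unfolding isoQ_def isoN_def chord_prod_def One_nat_def chord_Suc[OF assms]
  by (simp add: rho_deriv_0 algebra_simps)

lemma isoQ_le:
  assumes "\<theta> < 1/2 - isoDelta"
  shows "isoQ \<theta> \<le> 2 * (1 - 2*\<theta>) + rho \<theta> * sqrt (1 - 2*\<theta>) - 3/2 * rho \<theta> * rho (\<theta> + isoDelta)"
proof -
  have \<rho>: "rho \<theta> > 0" "rho (\<theta> + isoDelta) > 0" using assms isoDelta_pos by (auto intro: rho_pos)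
  have G: "norm (chord 0 \<theta>) \<le> sqrt (1 - 2*\<theta>)" by (rule norm_chord_0_le[OF assms])
  have "- Im (cnj (chord 0 \<theta>) * cis isoDelta) \<le> sqrt (1 - 2*\<theta>)"
    using abs_Im_le_cmod[of "cnj (chord 0 \<theta>) * cis isoDelta"] G by (simp add: norm_mult)
  from mult_left_mono[OF this less_imp_le[OF \<rho>(1)]]
  have "- (rho \<theta> * Im (cnj (chord 0 \<theta>) * cis isoDelta)) \<le> rho \<theta> * sqrt (1 - 2*\<theta>)"
    by (simp add: algebra_simps)
  moreover have "isoN \<theta> \<le> 1 - 2*\<theta>"
    using power_mono[OF G, of 2] assms isoDelta_pos by (simp add: isoN_eq)
  moreover have "rho (\<theta> + isoDelta) * (3/2 * rho \<theta>) \<le> rho (\<theta> + isoDelta) * Im (chord 0 \<theta>)"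
    using Im_chord_0_ge[OF assms] \<rho> by (intro mult_left_mono) auto
  ultimately show ?thesis by (simp add: isoQ_eq_chord_0[OF assms] algebra_simps)
qed

lemma isopticI_near_end:
  "\<exists>B c C. c > 0 \<and> (\<forall>\<theta>\<in>{1/2 - isoDelta - 1<..<1/2 - isoDelta}.
      0 < isoN \<theta> \<and> isoN \<theta> \<le> B \<and> isoQ \<theta> \<le> C - c * rho (\<theta> + isoDelta))"
proof (intro exI conjI ballI)
  define e where "e = 1/2 - isoDelta"
  have e: "e < 1/2" using isoDelta_pos by (simp add: e_def)
  show "3/2 * rho (e - 1) > 0" using rho_pos e by simp
  fix \<theta> assume "\<theta> \<in> {1/2 - isoDelta - 1<..<1/2 - isoDelta}"
  then have \<theta>: "e - 1 < \<theta>" "\<theta> < e" "\<theta> < 1/2 - isoDelta" by (auto simp: e_def)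
  have \<rho>: "rho (e - 1) \<le> rho \<theta>" "rho \<theta> \<le> rho e" "rho (\<theta> + isoDelta) > 0"
    using rho_deriv_mono[of _ _ 0] \<theta> e isoDelta_pos by (auto simp: rho_deriv_0 intro: rho_pos)
  have "0 < 3/2 * rho \<theta>" using \<theta> e rho_pos by simp
  also have "\<dots> \<le> Im (chord 0 \<theta>)" by (rule Im_chord_0_ge[OF \<theta>(3)])
  also have "\<dots> \<le> norm (chord 0 \<theta>)" using abs_Im_le_cmod[of "chord 0 \<theta>"] by simp
  finally show "0 < isoN \<theta>" by (simp add: isoN_eq)
  have G: "norm (chord 0 \<theta>) \<le> sqrt (3 - 2*e)"
    using norm_chord_0_le[OF \<theta>(3)] real_sqrt_le_mono[of "1 - 2*\<theta>" "3 - 2*e"] \<theta> by linarith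
  show "isoN \<theta> \<le> 3 - 2*e"
    using power_mono[OF G, of 2] e by (simp add: isoN_eq)
  have "isoQ \<theta> \<le> 2 * (1 - 2*\<theta>) + rho \<theta> * sqrt (1 - 2*\<theta>) - 3/2 * rho \<theta> * rho (\<theta> + isoDelta)"
    by (rule isoQ_le[OF \<theta>(3)])
  also have "\<dots> \<le> (2 * (3 - 2*e) + rho e * sqrt (3 - 2*e)) - 3/2 * rho (e - 1) * rho (\<theta> + isoDelta)"
  proof -
    have "sqrt (1 - 2*\<theta>) \<le> sqrt (3 - 2*e)" using \<theta> by simp
    then have "rho \<theta> * sqrt (1 - 2*\<theta>) \<le> rho e * sqrt (3 - 2*e)"
      using \<rho> rho_pos[OF e] \<theta>(2) e by (intro mult_mono) auto
    moreover have "3/2 * rho (e - 1) * rho (\<theta> + isoDelta) \<le> 3/2 * rho \<theta> * rho (\<theta> + isoDelta)"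
      using \<rho> by (intro mult_right_mono) auto
    moreover have "2 * (1 - 2*\<theta>) \<le> 2 * (3 - 2*e)" using \<theta> by simp
    ultimately show ?thesis by (intro diff_mono add_mono)
  qed
  finally show "isoQ \<theta> \<le> (2 * (3 - 2*e) + rho e * sqrt (3 - 2*e)) - 3/2 * rho (e - 1) * rho (\<theta> + isoDelta)" .
qed

lemma rho_shift_tendsto_at_top: "filterlim (\<lambda>\<theta>. rho (\<theta> + isoDelta)) at_top (at_left (1/2 - isoDelta))"
proof -
  have "filterlim (\<lambda>\<theta>. (1 - 2*(\<theta> + d)) powr (-1/2)) at_top (at_left (1/2 - d))" for d :: real
    by real_asymp
  then show ?thesis by (simp add: rho_def)
qed

lemma inverse_isoR_tendsto_at_top: "filterlim (\<lambda>\<theta>. 1 / isoR \<theta>) at_top (at_left (1/2 - isoDelta))"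
proof -
  define e where "e = 1/2 - isoDelta"
  obtain B c C where "c > 0" and near:
    "\<And>\<theta>. \<theta> \<in> {e - 1<..<e} \<Longrightarrow> 0 < isoN \<theta> \<and> isoN \<theta> \<le> B \<and> isoQ \<theta> \<le> C - c * rho (\<theta> + isoDelta)"
    using isopticI_near_end unfolding e_def by blast
  have "B > 0" using near[of "e - 1/2"] by auto
  define K where "K = sin isoDelta / sqrt B ^ 3"
  have K: "K > 0" using \<open>B > 0\<close> sin_isoDelta_pos by (simp add: K_def)
  have lower: "filterlim (\<lambda>\<theta>. - (K * C) + K * c * rho (\<theta> + isoDelta)) at_top (at_left e)"
    unfolding e_def using K \<open>c > 0\<close>
    by (intro filterlim_tendsto_add_at_top[OF tendsto_const]
        filterlim_tendsto_pos_mult_at_top[OF tendsto_const _ rho_shift_tendsto_at_top]) simp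
  have "eventually (\<lambda>\<theta>. \<theta> \<in> {e - 1<..<e}) (at_left e)"
    by (rule eventually_at_left_real) simp
  then have "eventually (\<lambda>\<theta>. - (K * C) + K * c * rho (\<theta> + isoDelta) \<le> 1 / isoR \<theta>) (at_left e)"
  proof eventually_elim
    case (elim \<theta>)
    with near have N: "0 < isoN \<theta>" "isoN \<theta> \<le> B" and Q: "isoQ \<theta> \<le> C - c * rho (\<theta> + isoDelta)"
      by auto
    have "K * (c * rho (\<theta> + isoDelta) - C) \<le> K * \<bar>isoQ \<theta>\<bar>"
      using Q K by (intro mult_left_mono) auto
    also have "\<dots> \<le> sin isoDelta * \<bar>isoQ \<theta>\<bar> / sqrt (isoN \<theta>) ^ 3"
      unfolding K_def using N sin_isoDelta_pos
      by (simp add: divide_simps mult_left_mono power_mono)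
    also have "\<dots> = 1 / isoR \<theta>"
      by (simp add: isoR_eq)
    finally show ?case by (simp add: algebra_simps)
  qed
  with lower show ?thesis
    unfolding e_def by (rule filterlim_at_top_mono)
qed

lemma isopticI_eventually_near_end:
  "\<exists>B. eventually (\<lambda>\<theta>. \<theta> < 1/2 - isoDelta \<and> 0 < isoN \<theta> \<and> isoN \<theta> \<le> B \<and> isoQ \<theta> < 0)
         (at_left (1/2 - isoDelta))"
proof -
  define e where "e = 1/2 - isoDelta"
  obtain B c C where "c > 0" and near:
    "\<And>\<theta>. \<theta> \<in> {e - 1<..<e} \<Longrightarrow> 0 < isoN \<theta> \<and> isoN \<theta> \<le> B \<and> isoQ \<theta> \<le> C - c * rho (\<theta> + isoDelta)"
    using isopticI_near_end unfolding e_def by blast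
  have "eventually (\<lambda>\<theta>. C / c < rho (\<theta> + isoDelta)) (at_left e)"
    using rho_shift_tendsto_at_top unfolding e_def filterlim_at_top_dense by blast
  moreover have "eventually (\<lambda>\<theta>. \<theta> \<in> {e - 1<..<e}) (at_left e)"
    by (rule eventually_at_left_real) simp
  ultimately have "eventually (\<lambda>\<theta>. \<theta> < e \<and> 0 < isoN \<theta> \<and> isoN \<theta> \<le> B \<and> isoQ \<theta> < 0) (at_left e)"
  proof eventually_elim
    case (elim \<theta>)
    with near[of \<theta>] \<open>c > 0\<close> show ?case by (auto simp: field_simps)
  qed
  then show ?thesis unfolding e_def by blast
qed

lemma isopticI_lcg_not_line_slope_minus_one:
  assumes line: "\<forall>\<theta>. \<theta> < 1/2 - isoDelta \<longrightarrow> lcg_y isopticI \<theta> = - lcg_x isopticI \<theta> + k"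
  shows False
proof -
  obtain B b where "b < 1/2 - isoDelta" and b: "\<And>\<theta>. \<theta> \<in> {b<..<1/2 - isoDelta} \<Longrightarrow>
      \<theta> < 1/2 - isoDelta \<and> 0 < isoN \<theta> \<and> isoN \<theta> \<le> B \<and> isoQ \<theta> < 0"
    using isopticI_eventually_near_end by (auto simp: eventually_at_left_field)
  have deriv: "((\<lambda>\<theta>. 1 / isoR \<theta>) has_real_derivative - isoL \<theta> / isoR \<theta>) (at \<theta>) \<and>
      \<bar>- isoL \<theta> / isoR \<theta>\<bar> \<le> exp (- k) * (sqrt B / sin isoDelta)"
    if "\<theta> \<in> {b<..<1/2 - isoDelta}" for \<theta>
  proof
    have \<theta>: "\<theta> < 1/2 - isoDelta" "isoN \<theta> > 0" "isoQ \<theta> \<noteq> 0" "isoN \<theta> \<le> B"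
      using b[OF that] by auto
    have R: "isoR \<theta> > 0" using isoR_pos \<theta> by auto
    show "((\<lambda>\<theta>. 1 / isoR \<theta>) has_real_derivative - isoL \<theta> / isoR \<theta>) (at \<theta>)"
      using R by (auto intro!: derivative_eq_intros isoR_has_real_derivative \<theta> simp: power2_eq_square)
    have "\<bar>isoR \<theta> * isoL \<theta>\<bar> / radius_curv isopticI \<theta> ^ 2 \<le> exp (- k) * speed isopticI \<theta>"
      using radius_curv_isopticI_has_real_derivative[OF \<theta>(1-3)] line \<theta>(1) R \<theta>(2)
      by (intro lcg_slope_minus_one_imp_curvature_deriv_le)
         (simp_all add: radius_curv_isopticI speed_isopticI isoS_def sin_isoDelta_pos)
    also have "\<dots> \<le> exp (- k) * (sqrt B / sin isoDelta)"
      using \<theta> sin_isoDelta_pos by (simp add: speed_isopticI isoS_def divide_right_mono)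
    finally show "\<bar>- isoL \<theta> / isoR \<theta>\<bar> \<le> exp (- k) * (sqrt B / sin isoDelta)"
      using R by (simp add: radius_curv_isopticI \<theta> abs_mult power2_eq_square abs_divide)
  qed
  from bounded_derivative_imp_not_tendsto_at_top[OF \<open>b < 1/2 - isoDelta\<close> deriv]
    inverse_isoR_tendsto_at_top
  show False by blast
qed

theorem mainTheorem3:
  shows "\<not> (\<exists>\<alpha> k. \<forall>\<theta>. \<theta> < 1/2 - isoDelta \<longrightarrow>
              lcg_y isopticI \<theta> = \<alpha> * lcg_x isopticI \<theta> + k)
         \<and> ((\<lambda>\<theta>. (lcg_y isopticI \<theta> - lcg_y isopticI (\<theta> - pi)) /
                   (lcg_x isopticI \<theta> - lcg_x isopticI (\<theta> - pi))) \<longlongrightarrow> -1) at_bot"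
proof
  show "\<not> (\<exists>\<alpha> k. \<forall>\<theta>. \<theta> < 1/2 - isoDelta \<longrightarrow> lcg_y isopticI \<theta> = \<alpha> * lcg_x isopticI \<theta> + k)"
  proof
    assume "\<exists>\<alpha> k. \<forall>\<theta>. \<theta> < 1/2 - isoDelta \<longrightarrow> lcg_y isopticI \<theta> = \<alpha> * lcg_x isopticI \<theta> + k"
    then obtain \<alpha> k where line: "\<And>\<theta>. \<theta> < 1/2 - isoDelta \<Longrightarrow> lcg_y isopticI \<theta> = \<alpha> * lcg_x isopticI \<theta> + k"
      by blast
    have "\<alpha> = -1"
      using affine_slope_eq_difference_quotient_limit[OF line _ isopticI_lcg_slope_tendsto] by simp
    with line show False
      by (intro isopticI_lcg_not_line_slope_minus_one[of k]) simp
  qed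
  show "((\<lambda>\<theta>. (lcg_y isopticI \<theta> - lcg_y isopticI (\<theta> - pi)) /
           (lcg_x isopticI \<theta> - lcg_x isopticI (\<theta> - pi))) \<longlongrightarrow> -1) at_bot"
    by (rule isopticI_lcg_slope_tendsto)
qed

end
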